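(* Let $(V,[\cdot,\cdot]_V,\langle\cdot,\cdot\rangle)$ be a quadratic Lie algebra whose adjoint map $\mathrm{ad}:V\to\mathfrak{gl}(V)$ is injective, and let $\mathcal V$ be the string-type Lie 2-algebra: the 2-vector space of the complex $\mathbb R\xrightarrow{0}V$ (objects $V$, morphisms $V\oplus\mathbb R$), bracket $[(u,r),(v,r')]_{\mathcal V}=([u,v]_V,0)$, Jacobiator $J_{u,v,w}=([[u,v]_V,w]_V,\langle[u,v]_V,w\rangle)$. Identify $\mathrm{End}^0_{\mathrm d}(\mathcal V)=\mathfrak{gl}(V)\oplus\mathbb R$ and $\mathrm{End}^1(\mathcal V)=\mathrm{Hom}(V,\mathbb R)$, fix a linear complement $\mathrm{Im}(\mathrm{ad})^\perp$ of $\mathrm{Im}(\mathrm{ad})$ in $\mathfrak{gl}(V)$, and define $\alpha:\mathfrak{gl}(V)\oplus\mathbb R\to\mathrm{Hom}(V,\mathbb R)$ by $\alpha(\mathrm{ad}_u+X+r)(v)=\langle u,v\rangle$ for $u,v\in V$, $X\in\mathrm{Im}(\mathrm{ad})^\perp$, $r\in\mathbb R$. Let $\mu=(\mathrm{Id},\mathrm{Id},\mu_2)$ with $\mu_2(A,B)=([A,B],d\alpha(A,B))$, $d\alpha(A,B)=[A,\alpha(B)]-[B,\alpha(A)]-\alpha([A,B])$. Then $\mu_2(\mathrm{ad}_u,\mathrm{ad}_v)(w)=J_{u,v,w}$ for all $u,v,w\in V$, and the graph $\mathfrak G_{\mathrm{ad}_{\mathcal V}}$ of the linear functor $\mathrm{ad}_{\mathcal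 V}:\mathcal V\to\mathfrak{gl}(\mathcal V)$, $\mathrm{ad}_{\mathcal V}\xi(\eta)=[\xi,\eta]_{\mathcal V}$, is a Dirac structure of the $\mu$-twisted omni-Lie 2-algebra $\mathfrak{gl}(\mathcal V)\oplus_\mu\mathcal V$ whose associated Lie 2-algebra $(\mathcal V,[\cdot,\cdot]_{\mu,\mathrm{ad}_{\mathcal V}},J)$, with $[\xi,\eta]_{\mu,\mathrm{ad}_{\mathcal V}}=\mu_1(\mathrm{ad}_{\mathcal V}\xi)(\eta)$ and $J_{u,v,w}=\mu_2(\mathrm{ad}_{\mathcal V}u,\mathrm{ad}_{\mathcal V}v)(w)$, is exactly the string-type Lie 2-algebra $\mathcal V$.
   Context: All vector spaces are finite-dimensional over $\mathbb R$. A quadratic Lie algebra is a Lie algebra with a nondegenerate symmetric bilinear form invariant under the adjoint action. For a 2-term complex $V_1\xrightarrow{\mathrm d}V_0$, the 2-vector space $\mathbb V$ has objects $V_0$, morphisms $V_0\oplus V_1$ ($u+m$), $s(u+m)=u$, $t(u+m)=u+\mathrm dm$. $\mathrm{End}^0_{\mathrm d}(\mathbb V)=\{A=(A_0,A_1):A_0\mathrm d=\mathrm dA_1\}$, $\mathrm{End}^1(\mathbb V)=\mathrm{Hom}(V_0,V_1)$, $\delta\phi=(\mathrm d\phi,\phi\mathrm d)$; brackets $[A,B]$ componentwise commutator, $[A,\phi]=-[\phi,A]=A_1\phi-\phi A_0$, $[\phi,\psi]_\delta=\phi\mathrm d\psi-\psi\mathrm d\phi$. The strict Lie 2-algebra $\mathfrak{gl}(\mathbb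 V)$ has objects $\mathrm{End}^0_{\mathrm d}(\mathbb V)$, morphisms $A+\phi$, $s(A+\phi)=A$, $t(A+\phi)=A+\delta\phi$, bracket $[A+\phi,B+\psi]=[A,B]+[\phi,\psi]_\delta+[A,\psi]+[\phi,B]$, and acts on $\mathbb V$ by $A(u)=A_0u$, $(A+\phi)(u+m)=A_0u+(A_1m+\phi(u+\mathrm dm))$. A Lie 2-algebra is a 2-vector space with a skew-symmetric bilinear functor and a skew-symmetric trilinear natural isomorphism $J_{x,y,z}:[[x,y],z]\to[x,[y,z]]+[[x,z],y]$ satisfying the Jacobiator identity; Lie 2-algebra (iso)morphisms $(\mu_0,\mu_1,\mu_2)$ consist of a linear functor and a skew-symmetric bilinear natural transformation $\mu_2(u,v):\mu_0[u,v]\to[\mu_0u,\mu_0v]$ compatible with the Jacobiators. The $\mu$-twisted omni-Lie 2-algebra $\mathfrak{gl}(\mathbb V)\oplus_\mu\mathbb V$ is $\mathfrak{gl}(\mathbb V)\oplus\mathbb V$ with bracket $[\![A+\phi+u+m,B+\psi+v+n]\!]_\mu=[A+\phi,B+\psi]+\tfrac12(\mu_1(A+\phi)(v+n)-\mu_1(B+\psi)(u+m))$ and pairing $\langle A+\phi+u+m,B+\psi+v+n\rangle_\mu=\tfrac12(\mu_1(A+\phi)(v+n)+\mu_1(B+\psi)(u+m))$ (on objects, same with $\mu_0$). A Dirac structure is a 2-sub-vector space $L$ with $L=L^\perp$ (w.r.t. $\langle\cdot,\cdot\rangle_\mu$) closed under $[\![\cdot,\cdot]\!]_\mu$. *)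

theory Defs
  imports "HOL-Analysis.Analysis"
begin

text \<open>Objects of the 2-vector space are elements u of V0 (type 'a); morphisms u+m are
pairs (u,m) :: 'a \<times> 'b with source u and target u + d m.\<close>

text \<open>End^0_d: pairs (A0,A1) of linear maps with A0 o d = d o A1.
  End^1 = Hom(V0,V1).  A morphism of gl(V) is a pair (A, phi), written A+phi in the paper.\<close>

definition end0 :: "('b::real_vector \<Rightarrow> 'a::real_vector) \<Rightarrow> (('a \<Rightarrow> 'a) \<times> ('b \<Rightarrow> 'b)) set" where
  "end0 d = {(A0, A1). linear A0 \<and> linear A1 \<and> (\<forall>m. A0 (d m) = d (A1 m))}"

definition end1 :: "('a::real_vector \<Rightarrow> 'b::real_vector) set" where
  "end1 = {phi. linear phi}"

definition delta :: "('b::real_vector \<Rightarrow> 'a::real_vector) \<Rightarrow> ('a \<Rightarrow> 'b) \<Rightarrow> ('a \<Rightarrow> 'a) \<times> ('b \<Rightarrow> 'b)" where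
  "delta d phi = ((\<lambda>u. d (phi u)), (\<lambda>m. phi (d m)))"

definition end0_add :: "('a \<Rightarrow> 'a::real_vector) \<times> ('b \<Rightarrow> 'b::real_vector) \<Rightarrow> ('a \<Rightarrow> 'a) \<times> ('b \<Rightarrow> 'b) \<Rightarrow> ('a \<Rightarrow> 'a) \<times> ('b \<Rightarrow> 'b)" where
  "end0_add A B = ((\<lambda>u. fst A u + fst B u), (\<lambda>m. snd A m + snd B m))"

definition br_end0 :: "('a \<Rightarrow> 'a::real_vector) \<times> ('b \<Rightarrow> 'b::real_vector) \<Rightarrow> ('a \<Rightarrow> 'a) \<times> ('b \<Rightarrow> 'b) \<Rightarrow> ('a \<Rightarrow> 'a) \<times> ('b \<Rightarrow> 'b)" where
  "br_end0 A B = ((\<lambda>u. fst A (fst B u) - fst B (fst A u)), (\<lambda>m. snd A (snd B m) - snd B (snd A m)))"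

definition br_end01 :: "('a \<Rightarrow> 'a::real_vector) \<times> ('b \<Rightarrow> 'b::real_vector) \<Rightarrow> ('a \<Rightarrow> 'b) \<Rightarrow> ('a \<Rightarrow> 'b)" where
  "br_end01 A phi = (\<lambda>u. snd A (phi u) - phi (fst A u))"

definition br_delta :: "('b::real_vector \<Rightarrow> 'a::real_vector) \<Rightarrow> ('a \<Rightarrow> 'b) \<Rightarrow> ('a \<Rightarrow> 'b) \<Rightarrow> ('a \<Rightarrow> 'b)" where
  "br_delta d phi psi = (\<lambda>u. phi (d (psi u)) - psi (d (phi u)))"

text \<open>Bracket of morphisms of gl(V):
  [A+phi, B+psi] = [A,B] + [phi,psi]_delta + [A,psi] + [phi,B]\<close>
definition gl_br :: "('b::real_vector \<Rightarrow> 'a::real_vector)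
   \<Rightarrow> (('a \<Rightarrow> 'a) \<times> ('b \<Rightarrow> 'b)) \<times> ('a \<Rightarrow> 'b) \<Rightarrow> (('a \<Rightarrow> 'a) \<times> ('b \<Rightarrow> 'b)) \<times> ('a \<Rightarrow> 'b)
   \<Rightarrow> (('a \<Rightarrow> 'a) \<times> ('b \<Rightarrow> 'b)) \<times> ('a \<Rightarrow> 'b)" where
  "gl_br d X Y = (br_end0 (fst X) (fst Y),
      (\<lambda>u. br_delta d (snd X) (snd Y) u + br_end01 (fst X) (snd Y) u - br_end01 (fst Y) (snd X) u))"

definition act_obj :: "('a \<Rightarrow> 'a) \<times> ('b \<Rightarrow> 'b) \<Rightarrow> 'a \<Rightarrow> 'a" where
  "act_obj A u = fst A u"

definition act_mor :: "('b::real_vector \<Rightarrow> 'a::real_vector)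
   \<Rightarrow> (('a \<Rightarrow> 'a) \<times> ('b \<Rightarrow> 'b)) \<times> ('a \<Rightarrow> 'b) \<Rightarrow> 'a \<times> 'b \<Rightarrow> 'a \<times> 'b" where
  "act_mor d X um = (fst (fst X) (fst um), snd (fst X) (snd um) + snd X (fst um + d (snd um)))"

text \<open>Objects: (A, u) with A in End^0_d, u in V0.
  Morphisms: ((A,phi),(u,m)), i.e. A+phi+u+m.\<close>

definition omni_obj :: "('b::real_vector \<Rightarrow> 'a::real_vector) \<Rightarrow> ((('a \<Rightarrow> 'a) \<times> ('b \<Rightarrow> 'b)) \<times> 'a) set" where
  "omni_obj d = end0 d \<times> UNIV"

definition omni_mor :: "('b::real_vector \<Rightarrow> 'a::real_vector)
   \<Rightarrow> (((('a \<Rightarrow> 'a) \<times> ('b \<Rightarrow> 'b)) \<times> ('a \<Rightarrow> 'b)) \<times> ('a \<times> 'b)) set" where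
  "omni_mor d = (end0 d \<times> end1) \<times> UNIV"

definition omni_s :: "(((('a \<Rightarrow> 'a) \<times> ('b \<Rightarrow> 'b)) \<times> ('a \<Rightarrow> 'b)) \<times> ('a \<times> 'b)) \<Rightarrow> (('a \<Rightarrow> 'a) \<times> ('b \<Rightarrow> 'b)) \<times> 'a" where
  "omni_s e = (fst (fst e), fst (snd e))"

definition omni_t :: "('b::real_vector \<Rightarrow> 'a::real_vector)
   \<Rightarrow> (((('a \<Rightarrow> 'a) \<times> ('b \<Rightarrow> 'b)) \<times> ('a \<Rightarrow> 'b)) \<times> ('a \<times> 'b)) \<Rightarrow> (('a \<Rightarrow> 'a) \<times> ('b \<Rightarrow> 'b)) \<times> 'a" where
  "omni_t d e = (end0_add (fst (fst e)) (delta d (snd (fst e))), fst (snd e) + d (snd (snd e)))"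

definition omni_id :: "(('a \<Rightarrow> 'a) \<times> ('b \<Rightarrow> 'b)) \<times> 'a \<Rightarrow> (((('a \<Rightarrow> 'a) \<times> ('b \<Rightarrow> 'b)) \<times> ('a \<Rightarrow> 'b::zero)) \<times> ('a \<times> 'b))" where
  "omni_id x = ((fst x, (\<lambda>u. 0)), (snd x, 0))"

definition obj_zero :: "(('a \<Rightarrow> 'a::real_vector) \<times> ('b \<Rightarrow> 'b::real_vector)) \<times> 'a" where
  "obj_zero = (((\<lambda>u. 0), (\<lambda>m. 0)), 0)"

definition obj_add :: "(('a \<Rightarrow> 'a::real_vector) \<times> ('b \<Rightarrow> 'b::real_vector)) \<times> 'a \<Rightarrow> (('a \<Rightarrow> 'a) \<times> ('b \<Rightarrow> 'b)) \<times> 'a \<Rightarrow> (('a \<Rightarrow> 'a) \<times> ('b \<Rightarrow> 'b)) \<times> 'a" where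
  "obj_add x y = (end0_add (fst x) (fst y), snd x + snd y)"

definition obj_scale :: "real \<Rightarrow> (('a \<Rightarrow> 'a::real_vector) \<times> ('b \<Rightarrow> 'b::real_vector)) \<times> 'a \<Rightarrow> (('a \<Rightarrow> 'a) \<times> ('b \<Rightarrow> 'b)) \<times> 'a" where
  "obj_scale c x = (((\<lambda>u. c *\<^sub>R fst (fst x) u), (\<lambda>m. c *\<^sub>R snd (fst x) m)), c *\<^sub>R snd x)"

definition mor_zero :: "(((('a \<Rightarrow> 'a::real_vector) \<times> ('b \<Rightarrow> 'b::real_vector)) \<times> ('a \<Rightarrow> 'b)) \<times> ('a \<times> 'b))" where
  "mor_zero = ((((\<lambda>u. 0), (\<lambda>m. 0)), (\<lambda>u. 0)), 0)"

definition mor_add :: "(((('a \<Rightarrow> 'a::real_vector) \<times> ('b \<Rightarrow> 'b::real_vector)) \<times> ('a \<Rightarrow> 'b)) \<times> ('a \<times> 'b))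
   \<Rightarrow> (((('a \<Rightarrow> 'a) \<times> ('b \<Rightarrow> 'b)) \<times> ('a \<Rightarrow> 'b)) \<times> ('a \<times> 'b))
   \<Rightarrow> (((('a \<Rightarrow> 'a) \<times> ('b \<Rightarrow> 'b)) \<times> ('a \<Rightarrow> 'b)) \<times> ('a \<times> 'b))" where
  "mor_add x y = ((end0_add (fst (fst x)) (fst (fst y)), (\<lambda>u. snd (fst x) u + snd (fst y) u)), snd x + snd y)"

definition mor_scale :: "real \<Rightarrow> (((('a \<Rightarrow> 'a::real_vector) \<times> ('b \<Rightarrow> 'b::real_vector)) \<times> ('a \<Rightarrow> 'b)) \<times> ('a \<times> 'b))
   \<Rightarrow> (((('a \<Rightarrow> 'a) \<times> ('b \<Rightarrow> 'b)) \<times> ('a \<Rightarrow> 'b)) \<times> ('a \<times> 'b))" where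
  "mor_scale c x = ((((\<lambda>u. c *\<^sub>R fst (fst (fst x)) u), (\<lambda>m. c *\<^sub>R snd (fst (fst x)) m)),
                      (\<lambda>u. c *\<^sub>R snd (fst x) u)), c *\<^sub>R snd x)"

text \<open>mu-twisted bracket and pairing (mu0, mu1 the functor part of mu).\<close>

definition omni_br_obj where
  "omni_br_obj mu0 x y =
     (br_end0 (fst x) (fst y), (1/2) *\<^sub>R (act_obj (mu0 (fst x)) (snd y) - act_obj (mu0 (fst y)) (snd x)))"

definition omni_pair_obj where
  "omni_pair_obj mu0 x y = (1/2) *\<^sub>R (act_obj (mu0 (fst x)) (snd y) + act_obj (mu0 (fst y)) (snd x))"

definition omni_br_mor where
  "omni_br_mor d mu1 x y =
     (gl_br d (fst x) (fst y), (1/2) *\<^sub>R (act_mor d (mu1 (fst x)) (snd y) - act_mor d (mu1 (fst y)) (snd x)))"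

definition omni_pair_mor where
  "omni_pair_mor d mu1 x y = (1/2) *\<^sub>R (act_mor d (mu1 (fst x)) (snd y) + act_mor d (mu1 (fst y)) (snd x))"

definition two_subspace where
  "two_subspace d Lobj Lmor \<longleftrightarrow>
     Lobj \<subseteq> omni_obj d \<and> Lmor \<subseteq> omni_mor d \<and>
     obj_zero \<in> Lobj \<and> (\<forall>x\<in>Lobj. \<forall>y\<in>Lobj. obj_add x y \<in> Lobj) \<and> (\<forall>c. \<forall>x\<in>Lobj. obj_scale c x \<in> Lobj) \<and>
     mor_zero \<in> Lmor \<and> (\<forall>x\<in>Lmor. \<forall>y\<in>Lmor. mor_add x y \<in> Lmor) \<and> (\<forall>c. \<forall>x\<in>Lmor. mor_scale c x \<in> Lmor) \<and>
     (\<forall>e\<in>Lmor. omni_s e \<in> Lobj \<and> omni_t d e \<in> Lobj) \<and>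
     (\<forall>x\<in>Lobj. omni_id x \<in> Lmor)"

definition perp_mor where
  "perp_mor d mu1 Lmor = {e \<in> omni_mor d. \<forall>l\<in>Lmor. omni_pair_mor d mu1 e l = 0}"

definition perp_obj where
  "perp_obj d mu1 Lmor = {x \<in> omni_obj d. omni_id x \<in> perp_mor d mu1 Lmor}"

definition dirac where
  "dirac d mu0 mu1 Lobj Lmor \<longleftrightarrow>
     two_subspace d Lobj Lmor \<and>
     Lobj = perp_obj d mu1 Lmor \<and> Lmor = perp_mor d mu1 Lmor \<and>
     (\<forall>x\<in>Lobj. \<forall>y\<in>Lobj. omni_br_obj mu0 x y \<in> Lobj) \<and>
     (\<forall>x\<in>Lmor. \<forall>y\<in>Lmor. omni_br_mor d mu1 x y \<in> Lmor)"

definition quadratic_lie where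
  "quadratic_lie (br :: 'a::real_vector \<Rightarrow> 'a \<Rightarrow> 'a) (bf :: 'a \<Rightarrow> 'a \<Rightarrow> real) \<longleftrightarrow>
     bilinear br \<and> (\<forall>u v. br u v = - br v u) \<and>
     (\<forall>u v w. br u (br v w) + br v (br w u) + br w (br u v) = 0) \<and>
     bilinear bf \<and> (\<forall>u v. bf u v = bf v u) \<and> (\<forall>u. (\<forall>v. bf u v = 0) \<longrightarrow> u = 0) \<and>
     (\<forall>u v w. bf (br w u) v + bf u (br w v) = 0)"

text \<open>String-type Lie 2-algebra on R --0--> V.\<close>
definition str_d :: "real \<Rightarrow> 'a::real_vector" where
  "str_d = (\<lambda>r. 0)"

definition str_br_mor :: "('a \<Rightarrow> 'a \<Rightarrow> 'a) \<Rightarrow> 'a \<times> real \<Rightarrow> 'a \<times> real \<Rightarrow> 'a \<times> real" where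
  "str_br_mor br x y = (br (fst x) (fst y), 0)"

definition str_J :: "('a \<Rightarrow> 'a \<Rightarrow> 'a) \<Rightarrow> ('a \<Rightarrow> 'a \<Rightarrow> real) \<Rightarrow> 'a \<Rightarrow> 'a \<Rightarrow> 'a \<Rightarrow> 'a \<times> real" where
  "str_J br bf u v w = (br (br u v) w, bf (br u v) w)"

text \<open>ad_V : V -> gl(V), ad_V xi (eta) = [xi,eta]_V.  On an object u it is (ad_u, 0) in End^0
  (A1 = 0 since [u, 0+m] = 0), on a morphism u+m it is (ad_u,0) + 0.\<close>
definition ad_obj :: "('a \<Rightarrow> 'a \<Rightarrow> 'a) \<Rightarrow> 'a \<Rightarrow> ('a \<Rightarrow> 'a) \<times> (real \<Rightarrow> real)" where
  "ad_obj br u = (br u, (\<lambda>m. 0))"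

definition ad_mor :: "('a \<Rightarrow> 'a \<Rightarrow> 'a) \<Rightarrow> 'a \<times> real \<Rightarrow> (('a \<Rightarrow> 'a) \<times> (real \<Rightarrow> real)) \<times> ('a \<Rightarrow> real)" where
  "ad_mor br x = (ad_obj br (fst x), (\<lambda>v. 0))"

definition graph_obj where
  "graph_obj br = {(ad_obj br u, u) | u. True}"

definition graph_mor where
  "graph_mor br = {(ad_mor br x, x) | x. True}"

definition ad_complement :: "('a::real_vector \<Rightarrow> 'a \<Rightarrow> 'a) \<Rightarrow> ('a \<Rightarrow> 'a) set \<Rightarrow> bool" where
  "ad_complement br W \<longleftrightarrow>
     (\<forall>X\<in>W. linear X) \<and> (\<lambda>x. 0) \<in> W \<and> (\<forall>X\<in>W. \<forall>Y\<in>W. (\<lambda>x. X x + Y x) \<in> W) \<and>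
     (\<forall>c. \<forall>X\<in>W. (\<lambda>x. c *\<^sub>R X x) \<in> W) \<and>
     (\<forall>u. br u \<in> W \<longrightarrow> br u = (\<lambda>x. 0)) \<and>
     (\<forall>A. linear A \<longrightarrow> (\<exists>u. \<exists>X\<in>W. A = (\<lambda>x. br u x + X x)))"

definition alpha :: "('a::real_vector \<Rightarrow> 'a \<Rightarrow> 'a) \<Rightarrow> ('a \<Rightarrow> 'a \<Rightarrow> real) \<Rightarrow> ('a \<Rightarrow> 'a) set
     \<Rightarrow> ('a \<Rightarrow> 'a) \<times> (real \<Rightarrow> real) \<Rightarrow> ('a \<Rightarrow> real)" where
  "alpha br bf W A = (\<lambda>v. bf (THE u. \<exists>X\<in>W. fst A = (\<lambda>x. br u x + X x)) v)"

definition dalpha where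
  "dalpha br bf W A B = (\<lambda>v. br_end01 A (alpha br bf W B) v - br_end01 B (alpha br bf W A) v
                              - alpha br bf W (br_end0 A B) v)"

definition mu2 where
  "mu2 br bf W A B = (br_end0 A B, dalpha br bf W A B)"

end

theory Submission
  imports Defs
begin

text \<open>
  Everything reduces to three identities of \<open>V\<close>: skew-symmetry, the Jacobi identity in the form
  \<open>[ad_u, ad_v] = ad_[u,v]\<close>, and invariance in the form \<open><u,[v,w]> = <[u,v],w>\<close>.

  (1) Twisting map.  If \<open>ad\<close> is injective and \<open>W\<close> is a complement of its image, the
      \<open>ad\<close>-component of \<open>ad_v\<close> is \<open>v\<close>, so \<open>\<alpha>(ad_v) = <v,_>\<close>; then \<open>d\<alpha>(ad_u,ad_v) = <[u,v],_>\<close>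
      by invariance, and \<open>\<mu>\<^sub>2(ad_u,ad_v)(w)\<close> is the string Jacobiator \<open>J_{u,v,w}\<close>.
  (2) Dirac structure.  The graph of \<open>ad_V\<close> is a 2-subspace; it is isotropic for the pairing by
      skew-symmetry, and conversely a morphism orthogonal to the whole graph is forced into it,
      so the graph equals its orthogonal on both levels.  Closure under the twisted bracket holds
      because \<open>ad_V\<close> preserves brackets.
  (3) The induced Lie 2-algebra is read off directly from the definition of \<open>ad_V\<close>.
\<close>

locale quadratic_lie_algebra =
  fixes br :: "'a::real_vector \<Rightarrow> 'a \<Rightarrow> 'a" and bf :: "'a \<Rightarrow> 'a \<Rightarrow> real"
  assumes quadratic: "quadratic_lie br bf"
begin

lemma br_bilinear: "bilinear br"
  and br_skew: "br u v = - br v u"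
  and br_jacobi: "br u (br v w) + br v (br w u) + br w (br u v) = 0"
  and bf_bilinear: "bilinear bf"
  and bf_ad_invariant: "bf (br w u) v + bf u (br w v) = 0"
  using quadratic unfolding quadratic_lie_def by meson+

lemma ad_linear: "linear (br u)"
  using br_bilinear unfolding bilinear_def by (simp add: eta_contract_eq)

lemma ad_zero: "br 0 = (\<lambda>x. 0)"
  using bilinear_lzero[OF br_bilinear] by auto

lemma ad_add: "br (u + v) = (\<lambda>x. br u x + br v x)"
  using bilinear_ladd[OF br_bilinear] by auto

lemma ad_scale: "br (c *\<^sub>R u) = (\<lambda>x. c *\<^sub>R br u x)"
  using bilinear_lmul[OF br_bilinear] by auto

text \<open>The Jacobi identity says that \<open>ad\<close> is a Lie algebra morphism: \<open>[ad_u, ad_v] = ad_[u,v]\<close>.\<close>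

lemma ad_commutator: "(\<lambda>w. br u (br v w) - br v (br u w)) = br (br u v)"
proof
  fix w
  have "br v (br w u) = - br v (br u w)"
    using br_skew[of w u] bilinear_rneg[OF br_bilinear] by simp
  moreover have "br w (br u v) = - br (br u v) w"
    by (rule br_skew)
  ultimately show "br u (br v w) - br v (br u w) = br (br u v) w"
    using br_jacobi[of u v w] by (simp add: algebra_simps)
qed

text \<open>Skew-symmetry turns the symmetrised bracket \<open>1/2([u,v] - [v,u])\<close> of the omni-Lie
  2-algebra back into \<open>[u,v]\<close>.\<close>

lemma half_skew_bracket: "(1/2 :: real) *\<^sub>R (br u v - br v u) = br u v"
proof -
  have "br u v - br v u = 2 *\<^sub>R br u v"
    using br_skew[of v u] by (simp add: scaleR_2)
  then show ?thesis by simp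
qed

lemma bf_bracket_assoc: "bf u (br v w) = bf (br u v) w"
proof -
  have "bf (br v u) w = - bf (br u v) w"
    using br_skew[of v u] bilinear_lneg[OF bf_bilinear] by simp
  then show ?thesis
    using bf_ad_invariant[of v u w] by simp
qed

text \<open>If \<open>ad\<close> is injective and \<open>W\<close> complements its image, the decomposition
  \<open>A = ad_u + X\<close> of \<open>A = ad_v\<close> has \<open>u = v\<close>; hence \<open>\<alpha>(ad_v) = <v,_>\<close>.\<close>

lemma alpha_ad:
  assumes inj: "inj br" and W: "ad_complement br W" and A: "fst A = br v"
  shows "alpha br bf W A = bf v"
proof -
  have "(THE u. \<exists>X\<in>W. br v = (\<lambda>x. br u x + X x)) = v"
  proof (rule the_equality)
    show "\<exists>X\<in>W. br v = (\<lambda>x. br v x + X x)"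
      using W unfolding ad_complement_def by (intro bexI[of _ "\<lambda>x. 0"]) auto
  next
    fix u assume "\<exists>X\<in>W. br v = (\<lambda>x. br u x + X x)"
    then obtain X where X: "X \<in> W" "br v = (\<lambda>x. br u x + X x)" by blast
    have "br (v - u) = X"
      using X(2) bilinear_lsub[OF br_bilinear] by (auto simp: fun_eq_iff)
    then have "br (v - u) = br 0"
      using W X(1) ad_zero unfolding ad_complement_def by auto
    then show "u = v"
      using inj by (auto dest: injD)
  qed
  then show ?thesis
    unfolding alpha_def A by simp
qed

text \<open>\<open>d\<alpha>(ad_u, ad_v) = <[u,v],_>\<close>: the three terms of \<open>d\<alpha>\<close> are each \<open>\<plusminus><[u,v],_>\<close>.\<close>

lemma dalpha_ad:
  assumes "inj br" and "ad_complement br W"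
  shows "dalpha br bf W (ad_obj br u) (ad_obj br v) = bf (br u v)"
proof -
  have alpha_u: "alpha br bf W (ad_obj br u) = bf u"
    and alpha_v: "alpha br bf W (ad_obj br v) = bf v"
    by (rule alpha_ad[OF assms]; simp add: ad_obj_def)+
  have alpha_uv: "alpha br bf W (br_end0 (ad_obj br u) (ad_obj br v)) = bf (br u v)"
    by (rule alpha_ad[OF assms]) (simp add: br_end0_def ad_obj_def ad_commutator)
  have "bf v (br u w) = - bf (br u v) w" for w
    using bf_bracket_assoc[of v u w] br_skew[of v u] bilinear_lneg[OF bf_bilinear] by simp
  then show ?thesis
    unfolding dalpha_def br_end01_def alpha_u alpha_v alpha_uv
    by (simp add: fun_eq_iff ad_obj_def bf_bracket_assoc)
qed

lemma mu2_ad_is_jacobiator: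
  assumes "inj br" and "ad_complement br W"
  shows "act_mor str_d (mu2 br bf W (ad_obj br u) (ad_obj br v)) (w, 0) = str_J br bf u v w"
  unfolding act_mor_def mu2_def str_J_def dalpha_ad[OF assms]
  by (simp add: br_end0_def ad_obj_def ad_commutator str_d_def)

lemma graph_obj_iff: "x \<in> graph_obj br \<longleftrightarrow> x = (ad_obj br (snd x), snd x)"
  unfolding graph_obj_def by (cases x) auto

lemma graph_mor_iff: "e \<in> graph_mor br \<longleftrightarrow> e = (ad_mor br (snd e), snd e)"
  unfolding graph_mor_def by (cases e) auto

lemma graph_objE:
  assumes "x \<in> graph_obj br" obtains u where "x = (ad_obj br u, u)"
  using assms graph_obj_iff by blast

lemma graph_morE:
  assumes "e \<in> graph_mor br" obtains u m where "e = (ad_mor br (u, m), (u, m))"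
  using assms graph_mor_iff by (metis surj_pair)

lemma graph_obj_memI: "(ad_obj br u, u) \<in> graph_obj br"
  unfolding graph_obj_def by blast

lemma graph_mor_memI: "(ad_mor br x, x) \<in> graph_mor br"
  unfolding graph_mor_def by blast

lemma ad_obj_in_end0: "ad_obj br u \<in> end0 str_d"
  unfolding ad_obj_def end0_def str_d_def
  by (simp add: ad_linear linear_0[OF ad_linear] linear_zero)

lemma ad_mor_in_omni: "(ad_mor br x, x) \<in> omni_mor str_d"
  unfolding omni_mor_def end1_def ad_mor_def using ad_obj_in_end0 by (auto intro: linear_zero)

lemma graph_obj_linear:
  "obj_add (ad_obj br u, u) (ad_obj br v, v) = (ad_obj br (u + v), u + v)"
  "obj_scale c (ad_obj br u, u) = (ad_obj br (c *\<^sub>R u), c *\<^sub>R u)"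
  unfolding obj_add_def obj_scale_def end0_add_def ad_obj_def by (simp_all add: ad_add ad_scale)

lemma graph_mor_linear:
  "mor_add (ad_mor br x, x) (ad_mor br y, y) = (ad_mor br (x + y), x + y)"
  "mor_scale c (ad_mor br x, x) = (ad_mor br (c *\<^sub>R x), c *\<^sub>R x)"
  unfolding mor_add_def mor_scale_def end0_add_def ad_mor_def ad_obj_def
  by (simp_all add: ad_add ad_scale)

lemma graph_mor_source_target:
  "omni_s (ad_mor br (u, m), (u, m)) = (ad_obj br u, u)"
  "omni_t str_d (ad_mor br (u, m), (u, m)) = (ad_obj br u, u)"
  unfolding omni_s_def omni_t_def ad_mor_def end0_add_def delta_def str_d_def ad_obj_def by simp_all

lemma omni_id_graph: "omni_id (ad_obj br u, u) = (ad_mor br (u, 0), (u, 0))"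
  unfolding omni_id_def ad_mor_def by simp

text \<open>Isotropy: \<open><ad u + (u,m), ad v + (v,n)> = 1/2([u,v] + [v,u], 0) = 0\<close>.\<close>

lemma graph_mor_isotropic:
  assumes "e \<in> graph_mor br" "l \<in> graph_mor br"
  shows "omni_pair_mor str_d id e l = 0"
proof -
  obtain u m v n where "e = (ad_mor br (u, m), (u, m))" "l = (ad_mor br (v, n), (v, n))"
    using assms by (elim graph_morE)
  then show ?thesis
    unfolding omni_pair_mor_def act_mor_def ad_mor_def ad_obj_def
    using br_skew[of u v] by (simp add: zero_prod_def)
qed

text \<open>Maximality: pairing \<open>(A\<^sub>0,A\<^sub>1) + \<phi> + (u,m)\<close> with the graph morphism over \<open>(v,n)\<close> gives
  \<open>A\<^sub>0 v + [v,u] = 0\<close> and \<open>A\<^sub>1 n + \<phi> v = 0\<close>; hence \<open>A\<^sub>1 = 0\<close>, \<open>\<phi> = 0\<close> and \<open>A\<^sub>0 = ad_u\<close>.\<close>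

lemma perp_graph_mor_subset: "perp_mor str_d id (graph_mor br) \<subseteq> graph_mor br"
proof
  fix e assume e: "e \<in> perp_mor str_d id (graph_mor br)"
  obtain A0 A1 phi u m where E: "e = (((A0, A1), phi), (u, m))"
    by (metis prod.collapse)
  have phi_linear: "linear phi"
    using e unfolding E perp_mor_def omni_mor_def end1_def by auto
  have "omni_pair_mor str_d id e (ad_mor br (v, n), (v, n)) = 0" for v n
    using e graph_mor_memI unfolding perp_mor_def by blast
  then have orth: "A0 v + br v u = 0 \<and> A1 n + phi v = 0" for v n
    unfolding E omni_pair_mor_def act_mor_def ad_mor_def ad_obj_def str_d_def
    by (simp add: zero_prod_def)
  have A1: "A1 = (\<lambda>n. 0)"
    using orth[of 0] linear_0[OF phi_linear] by auto
  have phi: "phi = (\<lambda>v. 0)"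
    using orth A1 by auto
  have A0: "A0 = br u"
  proof
    fix v show "A0 v = br u v"
      using orth[of v 0] br_skew[of v u] by (simp add: eq_neg_iff_add_eq_0)
  qed
  show "e \<in> graph_mor br"
    unfolding E A0 A1 phi using graph_mor_memI[of "(u, m)"] by (simp add: ad_mor_def ad_obj_def)
qed

lemma graph_mor_lagrangian: "graph_mor br = perp_mor str_d id (graph_mor br)"
proof
  show "graph_mor br \<subseteq> perp_mor str_d id (graph_mor br)"
  proof
    fix e assume e: "e \<in> graph_mor br"
    then have "e \<in> omni_mor str_d"
      using ad_mor_in_omni by (auto elim: graph_morE)
    then show "e \<in> perp_mor str_d id (graph_mor br)"
      unfolding perp_mor_def using graph_mor_isotropic e by blast
  qed
qed (rule perp_graph_mor_subset)

text \<open>\<dots> and hence on objects, \<open>L\<^sub>0 = L\<^sup>\<perp>\<^sub>0\<close>, since the identity of \<open>(A,u)\<close> lies in the graph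
  exactly when \<open>(A,u)\<close> does.\<close>

lemma graph_obj_lagrangian: "graph_obj br = perp_obj str_d id (graph_mor br)"
proof
  show "graph_obj br \<subseteq> perp_obj str_d id (graph_mor br)"
    unfolding perp_obj_def omni_obj_def
    using graph_mor_lagrangian ad_obj_in_end0 omni_id_graph graph_mor_memI
    by (auto elim!: graph_objE)
  show "perp_obj str_d id (graph_mor br) \<subseteq> graph_obj br"
  proof
    fix x assume "x \<in> perp_obj str_d id (graph_mor br)"
    then have "omni_id x \<in> graph_mor br"
      using graph_mor_lagrangian unfolding perp_obj_def by auto
    then show "x \<in> graph_obj br"
      unfolding graph_mor_iff graph_obj_iff omni_id_def ad_mor_def by (cases x) auto
  qed
qed

lemma graph_two_subspace: "two_subspace str_d (graph_obj br) (graph_mor br)"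
proof -
  have zeros: "obj_zero = (ad_obj br 0, 0)" "mor_zero = (ad_mor br 0, 0)"
    unfolding obj_zero_def mor_zero_def ad_mor_def ad_obj_def by (simp_all add: ad_zero)
  show ?thesis
    unfolding two_subspace_def zeros
    using ad_obj_in_end0 ad_mor_in_omni graph_obj_memI graph_mor_memI
      graph_obj_linear graph_mor_linear graph_mor_source_target omni_id_graph
    by (auto simp: omni_obj_def elim!: graph_objE graph_morE)
qed

text \<open>Because \<open>[ad_u, ad_v] = ad_[u,v]\<close>, the twisted bracket of graph elements over \<open>u, v\<close> is the
  graph element over \<open>[u,v]\<close>; on morphisms the \<open>\<real>\<close>-components are killed by \<open>ad\<close>.\<close>

lemma graph_obj_bracket:
  "omni_br_obj id (ad_obj br u, u) (ad_obj br v, v) = (ad_obj br (br u v), br u v)"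
  unfolding omni_br_obj_def act_obj_def
  by (simp add: br_end0_def ad_obj_def ad_commutator half_skew_bracket)

lemma graph_mor_bracket:
  "omni_br_mor str_d id (ad_mor br (u, m), (u, m)) (ad_mor br (v, n), (v, n))
     = (ad_mor br (br u v, 0), (br u v, 0))"
  unfolding omni_br_mor_def act_mor_def ad_mor_def gl_br_def br_delta_def br_end01_def
  by (simp add: br_end0_def ad_obj_def ad_commutator half_skew_bracket)

lemma graph_dirac: "dirac str_d id id (graph_obj br) (graph_mor br)"
  unfolding dirac_def
proof (intro conjI ballI)
  show "omni_br_obj id x y \<in> graph_obj br" if "x \<in> graph_obj br" "y \<in> graph_obj br" for x y
    using that by (elim graph_objE) (auto simp: graph_obj_bracket graph_obj_def)
  show "omni_br_mor str_d id x y \<in> graph_mor br" if "x \<in> graph_mor br" "y \<in> graph_mor br" for x y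
    using that by (elim graph_morE) (auto simp: graph_mor_bracket graph_mor_def)
qed (rule graph_two_subspace graph_obj_lagrangian graph_mor_lagrangian)+

end

theorem mainTheorem17:
  fixes br :: "'a::euclidean_space \<Rightarrow> 'a \<Rightarrow> 'a"
    and bf :: "'a \<Rightarrow> 'a \<Rightarrow> real"
    and W :: "('a \<Rightarrow> 'a) set"
  assumes "quadratic_lie br bf"
    and "inj br"
    and "ad_complement br W"
  shows "(\<forall>u v w. act_mor str_d (mu2 br bf W (ad_obj br u) (ad_obj br v)) (w, 0) = str_J br bf u v w)
    \<and> dirac str_d id id (graph_obj br) (graph_mor br)
    \<and> (\<forall>u v. act_obj (id (ad_obj br u)) v = br u v)
    \<and> (\<forall>x y. act_mor str_d (id (ad_mor br x)) y = str_br_mor br x y)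
    \<and> (\<forall>u v w. act_mor str_d (mu2 br bf W (ad_obj br u) (ad_obj br v)) (w, 0) = str_J br bf u v w)"
proof -
  interpret quadratic_lie_algebra br bf
    by unfold_locales (rule assms(1))
  have jacobiator: "act_mor str_d (mu2 br bf W (ad_obj br u) (ad_obj br v)) (w, 0) = str_J br bf u v w"
    for u v w using mu2_ad_is_jacobiator[OF assms(2,3)] .
  have induced_brackets:
    "act_obj (id (ad_obj br u)) v = br u v" "act_mor str_d (id (ad_mor br x)) y = str_br_mor br x y"
    for u v x y by (simp_all add: act_obj_def ad_obj_def act_mor_def ad_mor_def str_br_mor_def)
  show ?thesis
    using jacobiator graph_dirac induced_brackets by blast
qed

end
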